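(* Let $D$ be a finite index set and, for each $H\in D$, let $T_H(\mathbf{X})=\sum_{i=1}^{M_H}\theta_{H,i}\,\varphi_i^H(\mathbf{X})$ for $\mathbf{X}\in\mathbb{R}^D$, where each $\varphi_i^H(\mathbf{X})$ is a product of finitely many constants from $[0,1]$ and finitely many components $X_C$ ($C\in D$) of $\mathbf{X}$, and where (generative exclusiveness condition) for each $H$ the numbers $\theta_{H,1},\dots,\theta_{H,M_H}$ are the probabilities of pairwise distinct values $v_1,\dots,v_{M_H}$ of a single discrete random variable (so $\theta_{H,i}\ge 0$ and $\sum_{i=1}^{M_H}\theta_{H,i}\le 1$). Let $T=(T_H)_{H\in D}$, and define $\mathbf{X}_0=\mathbf{0}$ and $\mathbf{X}_{k+1}=T(\mathbf{X}_k)$ for $k\ge 0$. Then $\mathbf{X}_k\le\mathbf{1}$ for every $k\ge 0$.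
   Context: Vectors are compared componentwise; $\mathbf{0}$ and $\mathbf{1}$ denote the all-zero and all-one vectors in $\mathbb{R}^D$. The system $\mathbf{X}=T(\mathbf{X})$ is the set of probability equations derived from an explanation graph: $X_H$ is the unknown probability of a goal $H$, and the disjuncts of the defining formula of $H$ are each selected by a distinct outcome $v_i$ of one probabilistic switch with probability $\theta_{H,i}$. *)

theory Defs
  imports "HOL-Probability.Probability"
begin

text \<open>The term \<phi>_i^H(X): a product of finitely many constants (list cs)
  and finitely many components X_C (list of indices idx, repetitions allowed).\<close>
definition monomial :: "real list \<Rightarrow> 'd list \<Rightarrow> ('d \<Rightarrow> real) \<Rightarrow> real" where
  "monomial cs idx X = prod_list cs * prod_list (map X idx)"

text \<open>T_H(X) = sum_{i=1}^{M_H} theta_{H,i} phi_i^H(X), indices shifted to 0..M_H-1.\<close>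
definition T_op :: "('d \<Rightarrow> nat) \<Rightarrow> ('d \<Rightarrow> nat \<Rightarrow> real) \<Rightarrow> ('d \<Rightarrow> nat \<Rightarrow> real list)
    \<Rightarrow> ('d \<Rightarrow> nat \<Rightarrow> 'd list) \<Rightarrow> ('d \<Rightarrow> real) \<Rightarrow> ('d \<Rightarrow> real)" where
  "T_op M \<theta> cs idx X = (\<lambda>H. \<Sum>i<M H. \<theta> H i * monomial (cs H i) (idx H i) X)"

end

theory Submission
  imports Defs
begin

text \<open>Each \<open>\<phi>\<^sub>i\<^sup>H\<close> maps the unit cube \<open>[0,1]\<^sup>D\<close> into \<open>[0,1]\<close>, and generative exclusiveness
  makes \<open>T\<^sub>H\<close> a sub-convex combination of them, so \<open>T\<close> maps the cube into itself.
  Since \<open>\<zero>\<close> lies in the cube, so do all iterates \<open>X\<^sub>k\<close>.\<close>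

lemma prod_list_unit_interval:
  assumes "\<And>c. c \<in> set xs \<Longrightarrow> 0 \<le> c \<and> c \<le> (1::real)"
  shows "0 \<le> prod_list xs \<and> prod_list xs \<le> 1"
  using assms
proof (induction xs)
  case Nil
  then show ?case by simp
next
  case (Cons a xs)
  then have "0 \<le> a" "a \<le> 1" "0 \<le> prod_list xs" "prod_list xs \<le> 1" by auto
  then show ?case by (simp add: mult_le_one)
qed

lemma monomial_unit_interval:
  assumes "\<And>c. c \<in> set cs \<Longrightarrow> 0 \<le> c \<and> c \<le> 1"
    and "\<And>C. 0 \<le> X C \<and> X C \<le> 1"
  shows "0 \<le> monomial cs idx X \<and> monomial cs idx X \<le> 1"
proof -
  have "0 \<le> prod_list cs \<and> prod_list cs \<le> 1"
    using assms(1) by (rule prod_list_unit_interval)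
  moreover have "0 \<le> prod_list (map X idx) \<and> prod_list (map X idx) \<le> 1"
    using assms(2) by (intro prod_list_unit_interval) auto
  ultimately show ?thesis
    unfolding monomial_def by (simp add: mult_le_one)
qed

lemma sum_pmf_inj_on_le_1:
  assumes "finite A" "inj_on f A"
  shows "(\<Sum>i\<in>A. pmf p (f i)) \<le> 1"
proof -
  have "(\<Sum>i\<in>A. pmf p (f i)) = sum (pmf p) (f ` A)"
    using sum.reindex[OF assms(2), of "pmf p"] by simp
  also have "\<dots> = measure_pmf.prob p (f ` A)"
    using assms(1) by (simp add: measure_measure_pmf_finite)
  also have "\<dots> \<le> 1"
    by simp
  finally show ?thesis .
qed

lemma T_op_unit_interval:
  assumes const_range: "\<And>H i c. i < M H \<Longrightarrow> c \<in> set (cs H i) \<Longrightarrow> 0 \<le> c \<and> c \<le> 1"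
    and theta_nonneg: "\<And>H i. i < M H \<Longrightarrow> 0 \<le> \<theta> H i"
    and theta_sum: "\<And>H. (\<Sum>i<M H. \<theta> H i) \<le> 1"
    and X: "\<And>C. 0 \<le> X C \<and> X C \<le> 1"
  shows "0 \<le> T_op M \<theta> cs idx X H \<and> T_op M \<theta> cs idx X H \<le> 1"
proof -
  have mono: "0 \<le> monomial (cs H i) (idx H i) X \<and> monomial (cs H i) (idx H i) X \<le> 1"
    if "i < M H" for i
    using const_range[OF that] X by (rule monomial_unit_interval)
  have "0 \<le> T_op M \<theta> cs idx X H"
    unfolding T_op_def using mono theta_nonneg by (auto intro!: sum_nonneg)
  moreover have "T_op M \<theta> cs idx X H \<le> (\<Sum>i<M H. \<theta> H i)"
    unfolding T_op_def
    by (rule sum_mono) (use mono theta_nonneg in \<open>auto intro: mult_left_le\<close>)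
  ultimately show ?thesis
    using theta_sum[of H] by linarith
qed

theorem lemma2:
  fixes M :: "'d::finite \<Rightarrow> nat"
    and \<theta> :: "'d \<Rightarrow> nat \<Rightarrow> real"
    and cs :: "'d \<Rightarrow> nat \<Rightarrow> real list"
    and idx :: "'d \<Rightarrow> nat \<Rightarrow> 'd list"
    and p :: "'d \<Rightarrow> 'v pmf"
    and v :: "'d \<Rightarrow> nat \<Rightarrow> 'v"
  assumes const_range: "\<And>H i c. i < M H \<Longrightarrow> c \<in> set (cs H i) \<Longrightarrow> 0 \<le> c \<and> c \<le> 1"
    and distinct_vals: "\<And>H. inj_on (v H) {..<M H}"
    and theta_prob: "\<And>H i. i < M H \<Longrightarrow> \<theta> H i = pmf (p H) (v H i)"
  shows "\<forall>k H. ((T_op M \<theta> cs idx ^^ k) (\<lambda>_. 0)) H \<le> 1"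
proof -
  have theta_nonneg: "0 \<le> \<theta> H i" if "i < M H" for H i
    using theta_prob[OF that] by simp
  have theta_sum: "(\<Sum>i<M H. \<theta> H i) \<le> 1" for H
    using sum_pmf_inj_on_le_1[OF _ distinct_vals, of H "p H"] theta_prob by simp
  have "0 \<le> ((T_op M \<theta> cs idx ^^ k) (\<lambda>_. 0)) H \<and> ((T_op M \<theta> cs idx ^^ k) (\<lambda>_. 0)) H \<le> 1"
    for k H
  proof (induction k arbitrary: H)
    case 0
    then show ?case by simp
  next
    case (Suc k)
    then show ?case
      using T_op_unit_interval[of M cs \<theta>, OF const_range theta_nonneg theta_sum] by simp
  qed
  then show ?thesis by blast
qed

end
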